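(* Let $f=h+\overline{g}$ be a sense-preserving harmonic mapping in $\mathbb{D}$, normalized by $h(0)=g(0)=0$, $h'(0)=1$, $g'(0)=0$, with dilatation $\omega=g'/h'$, such that $\varphi=h-g$ is a convex mapping (univalent with convex image). Then for every $\alpha\in[0,1]$ with $\alpha\|\omega\|<\frac{1}{3}$, the mapping $f_\alpha$ is univalent in $\mathbb{D}$.
   Context: $\|\omega\|=\sup_{z\in\mathbb{D}}|\omega(z)|$. Define $\varphi_\alpha(z)=\int_0^z(\varphi'(\zeta))^\alpha d\zeta$ (branch with value $1$ at $\zeta=0$), and $f_\alpha=H+\overline{G}$, where $H,G$ are analytic in $\mathbb{D}$, $H(0)=G(0)=0$, $H-G=\varphi_\alpha$ and $G'/H'=\alpha\omega$. *)

theory Defs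
  imports "HOL-Analysis.Analysis"
begin

definition unit_disc :: "complex set" where
  "unit_disc = ball 0 1"

text \<open>Sense-preserving harmonic map h + conj g: Jacobian |h'|^2 - |g'|^2 > 0 on the disc.\<close>
definition sense_preserving_harm :: "(complex \<Rightarrow> complex) \<Rightarrow> (complex \<Rightarrow> complex) \<Rightarrow> bool" where
  "sense_preserving_harm h g \<longleftrightarrow> (\<forall>z\<in>unit_disc. cmod (deriv g z) < cmod (deriv h z))"

definition convex_mapping :: "(complex \<Rightarrow> complex) \<Rightarrow> bool" where
  "convex_mapping \<phi> \<longleftrightarrow> \<phi> holomorphic_on unit_disc \<and> inj_on \<phi> unit_disc \<and> convex (\<phi> ` unit_disc)"

definition sup_norm :: "(complex \<Rightarrow> complex) \<Rightarrow> real" where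
  "sup_norm w = (SUP z\<in>unit_disc. cmod (w z))"

end

theory Submission
  imports Defs "HOL-Complex_Analysis.Complex_Analysis"
begin

(*
  Write \<psi>' = exp \<Lambda> for a holomorphic \<psi> on the disc. If Re (1 + z \<Lambda>'(z)) > 0, the tangent of
  t \<mapsto> \<psi> (r e^(it)) turns monotonically, by exactly 2 pi per period, so every other point of
  the image circle lies strictly to the left of the tangent; by the minimum principle for Re, so
  does the image of the closed disc of radius r. Hence \<psi> is univalent, and a point left of all
  tangents of one circle has winding number one and is attained, which gives convexity of the image.
  Conversely, for a convex univalent \<phi>, Schwarz's lemma applied to \<phi>^-1 of convex combinations of
  values of \<phi> yields a support inequality whose second-order expansion along circles is
  Re (1 + z \<phi>''/\<phi>') \<ge> 0. As 1 + \<alpha> z L' = (1 - \<alpha>) + \<alpha> (1 + z L'), the criterion passes from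
  \<phi> to \<phi>\<alpha> = H - G, which is therefore univalent with convex image.
  Finally, the shear construction of Clunie and Sheil-Small: Re f = Re (H + G) and Im f = Im \<phi>\<alpha>,
  and along the preimage under \<phi>\<alpha> of a horizontal segment [a, a + t] the function Re (H + G)
  changes at the rate t * Re ((1 + \<alpha> \<omega>) / (1 - \<alpha> \<omega>)), which has constant nonzero sign
  because |\<alpha> \<omega>| < 1. So f cannot take the same value twice.
*)

lemma rcis_has_vector_derivative: "(rcis r has_vector_derivative (\<i> * rcis r t)) (at t)"
proof -
  have "((\<lambda>a. of_real r * exp (\<i> * a)) has_field_derivative \<i> * (of_real r * exp (\<i> * of_real t)))
          (at (of_real t))"
    by (auto intro!: derivative_eq_intros simp: algebra_simps)
  from has_vector_derivative_real_field[OF this]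
  have "((\<lambda>a. of_real r * exp (\<i> * of_real a)) has_vector_derivative \<i> * rcis r t) (at t)"
    by (simp add: rcis_def cis_conv_exp)
  moreover have "rcis r = (\<lambda>a. of_real r * exp (\<i> * of_real a))"
    by (simp add: fun_eq_iff rcis_def cis_conv_exp)
  ultimately show ?thesis
    by simp
qed

lemma rcis_comp_has_vector_derivative:
  assumes "(f has_field_derivative f') (at (rcis r t))"
  shows "((\<lambda>t. f (rcis r t)) has_vector_derivative \<i> * rcis r t * f') (at t)"
  using field_vector_diff_chain_at[OF rcis_has_vector_derivative assms] by (simp add: o_def)

lemma rcis_add_2pi: "rcis r (t + 2 * pi) = rcis r t"
  by (simp add: rcis_def cis_mult[symmetric])

lemma rcis_in_period:
  assumes "norm z = r"
  obtains t where "t0 \<le> t" "t < t0 + 2 * pi" "z = rcis r t"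
proof
  define n where "n = \<lfloor>(Arg z - t0) / (2 * pi)\<rfloor>"
  have "n \<le> (Arg z - t0) / (2 * pi)" "(Arg z - t0) / (2 * pi) < n + 1"
    unfolding n_def by linarith+
  then show "t0 \<le> Arg z - 2 * pi * n" "Arg z - 2 * pi * n < t0 + 2 * pi"
    by (simp_all add: field_simps)
  have "cis (Arg z) = cis (Arg z - 2 * pi * n) * cis (2 * pi * n)"
    unfolding cis_mult by simp
  then show "z = rcis r (Arg z - 2 * pi * n)"
    using rcis_cmod_Arg[of z] assms by (simp add: rcis_def)
qed

lemma Re_nonneg_cball_if_nonneg_sphere:
  assumes "f holomorphic_on S" "open S" "cball c r \<subseteq> S"
    and "\<And>z. z \<in> sphere c r \<Longrightarrow> 0 \<le> Re (f z)" and "\<xi> \<in> cball c r"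
  shows "0 \<le> Re (f \<xi>)"
proof -
  have hol: "(\<lambda>z. exp (- f z)) holomorphic_on S"
    using assms(1) by (auto intro!: holomorphic_intros)
  have "norm (exp (- f \<xi>)) \<le> 1"
  proof (rule maximum_modulus_frontier[where S = "cball c r" and f = "\<lambda>z. exp (- f z)" and \<xi> = \<xi>])
    show "(\<lambda>z. exp (- f z)) holomorphic_on interior (cball c r)"
      using holomorphic_on_subset[OF hol] assms(3) interior_subset by blast
    show "continuous_on (closure (cball c r)) (\<lambda>z. exp (- f z))"
      using holomorphic_on_imp_continuous_on[OF holomorphic_on_subset[OF hol assms(3)]] by simp
  qed (use assms(4,5) in \<open>auto simp: norm_exp_eq_Re\<close>)
  then show ?thesis
    by (simp add: norm_exp_eq_Re)
qed

lemma Re_pos_if_nonneg_on_open_subset: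
  assumes hol: "f holomorphic_on S" and "open S" "connected S" "open U" "U \<subseteq> S"
    and nonneg: "\<And>z. z \<in> U \<Longrightarrow> 0 \<le> Re (f z)" and w: "w \<in> S" "0 < Re (f w)" and z: "z \<in> U"
  shows "0 < Re (f z)"
proof (rule ccontr)
  assume "\<not> 0 < Re (f z)"
  with nonneg[OF z] have "Re (f z) = 0"
    by simp
  have "(\<lambda>z. exp (- f z)) constant_on S"
    by (rule maximum_modulus_principle[OF _ assms(2-5) z])
      (use hol nonneg \<open>Re (f z) = 0\<close> in \<open>auto intro!: holomorphic_intros simp: norm_exp_eq_Re\<close>)
  then have "exp (- f w) = exp (- f z)"
    using assms(5) w(1) z unfolding constant_on_def by (metis subsetD)
  then have "norm (exp (- f w)) = norm (exp (- f z))"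
    by simp
  with w(2) \<open>Re (f z) = 0\<close> show False
    by (simp add: norm_exp_eq_Re)
qed

lemma Re_cnj_mult_deriv_nonpos_if_norm_max:
  fixes V :: "real \<Rightarrow> complex"
  assumes "(V has_vector_derivative v) (at 0)"
    and "\<And>s. 0 < s \<Longrightarrow> s < 1 \<Longrightarrow> norm (V s) \<le> norm (V 0)"
  shows "Re (cnj (V 0) * v) \<le> 0"
proof (rule ccontr)
  assume pos: "\<not> Re (cnj (V 0) * v) \<le> 0"
  define \<rho> where "\<rho> s = Re (V s) * Re (V s) + Im (V s) * Im (V s)" for s
  have \<rho>_eq: "\<rho> s = (norm (V s))\<^sup>2" for s
    unfolding \<rho>_def cmod_power2 by (simp add: power2_eq_square)
  have "(\<rho> has_real_derivative 2 * Re (cnj (V 0) * v)) (at 0)"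
    unfolding \<rho>_def using assms(1)
    by (auto intro!: derivative_eq_intros simp: algebra_simps)
  moreover have "0 < 2 * Re (cnj (V 0) * v)"
    using pos by simp
  ultimately obtain d where "0 < d" and d: "\<forall>h>0. h < d \<longrightarrow> \<rho> 0 < \<rho> (0 + h)"
    using DERIV_pos_inc_right by blast
  define h where "h = min (d / 2) (1 / 2)"
  have "0 < h" "h < d" "h < 1"
    using \<open>0 < d\<close> by (auto simp: h_def)
  then have "\<rho> 0 < \<rho> h" and "norm (V h) \<le> norm (V 0)"
    using d assms(2) by simp_all
  then show False
    unfolding \<rho>_eq by (simp add: power_mono leD)
qed

lemma second_deriv_nonpos_at_max:
  fixes G G' :: "real \<Rightarrow> real"
  assumes G': "\<And>t. (G has_real_derivative G' t) (at t)"
    and G'': "(G' has_real_derivative D) (at a)"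
    and max: "\<And>t. G t \<le> G a"
  shows "D \<le> 0"
proof (rule ccontr)
  assume "\<not> D \<le> 0"
  then obtain d where "0 < d" and d: "\<forall>h>0. h < d \<longrightarrow> G' a < G' (a + h)"
    using DERIV_pos_inc_right[OF G''] by auto
  have "G' a = 0"
    using DERIV_local_max[OF G' zero_less_one] max by blast
  have "G a < G (a + d / 2)"
  proof (rule DERIV_pos_imp_increasing_open[of a "a + d / 2" G])
    show "a < a + d / 2"
      using \<open>0 < d\<close> by simp
    show "continuous_on {a..a + d / 2} G"
      using G' by (meson DERIV_isCont continuous_at_imp_continuous_on)
    fix x assume "a < x" "x < a + d / 2"
    then have "0 < G' x"
      using d[rule_format, of "x - a"] \<open>G' a = 0\<close> by simp
    then show "\<exists>y. (G has_real_derivative y) (at x) \<and> 0 < y"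
      using G' by blast
  qed
  then show False
    using max[of "a + d / 2"] by simp
qed

lemma inv_into_has_field_derivative:
  fixes \<phi> :: "complex \<Rightarrow> complex"
  assumes hol: "\<phi> holomorphic_on S" and "open S" and inj: "inj_on \<phi> S" and z: "z \<in> S"
  shows "(inv_into S \<phi> has_field_derivative 1 / deriv \<phi> z) (at (\<phi> z))"
proof -
  obtain k where k_hol: "k holomorphic_on \<phi> ` S"
    and k_deriv: "\<And>w. w \<in> S \<Longrightarrow> deriv \<phi> w * deriv k (\<phi> w) = 1"
    and k: "\<And>w. w \<in> S \<Longrightarrow> k (\<phi> w) = w"
    using holomorphic_has_inverse[OF hol \<open>open S\<close> inj] by metis
  have "open (\<phi> ` S)"
    using open_mapping_thm3[OF hol \<open>open S\<close> inj] .
  have "(k has_field_derivative deriv k (\<phi> z)) (at (\<phi> z))"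
    using holomorphic_derivI[OF k_hol \<open>open (\<phi> ` S)\<close>] z by blast
  moreover have "deriv \<phi> z \<noteq> 0"
    using holomorphic_injective_imp_regular[OF hol \<open>open S\<close> inj z] .
  then have "deriv k (\<phi> z) = 1 / deriv \<phi> z"
    using k_deriv[OF z] by (simp add: field_simps)
  ultimately have "(k has_field_derivative 1 / deriv \<phi> z) (at (\<phi> z))"
    by simp
  then show ?thesis
    by (rule has_field_derivative_transform_within_open[OF _ \<open>open (\<phi> ` S)\<close>])
      (use z inj k in auto)
qed

lemma DERIV_nonzero_imp_neq:
  fixes R :: "real \<Rightarrow> real"
  assumes "a < b" and R': "\<And>s. s \<in> {a..b} \<Longrightarrow> (R has_real_derivative R' s) (at s)"
    and nz: "\<And>s. a < s \<Longrightarrow> s < b \<Longrightarrow> R' s \<noteq> 0"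
  shows "R a \<noteq> R b"
proof
  assume "R a = R b"
  moreover have "continuous_on {a..b} R"
    using R' by (intro DERIV_atLeastAtMost_imp_continuous_on) auto
  moreover have "R differentiable (at s)" if "a < s" "s < b" for s
    using R'[of s] that unfolding real_differentiable_def by auto
  ultimately obtain s where s: "a < s" "s < b" "(R has_real_derivative 0) (at s)"
    using Rolle[OF \<open>a < b\<close>] by blast
  then have "R' s = 0"
    using R'[of s] DERIV_unique by simp
  with nz s show False
    by blast
qed

lemma deriv_eq_deriv_diff:
  assumes "H holomorphic_on S" "G holomorphic_on S" "open S" "z \<in> S"
    and "\<And>z. z \<in> S \<Longrightarrow> H z - G z = \<psi> z"
  shows "deriv \<psi> z = deriv H z - deriv G z"
proof -
  have "((\<lambda>z. H z - G z) has_field_derivative deriv H z - deriv G z) (at z)"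
    using holomorphic_derivI[OF assms(1,3,4)] holomorphic_derivI[OF assms(2,3,4)]
    by (auto intro!: derivative_eq_intros)
  then have "(\<psi> has_field_derivative deriv H z - deriv G z) (at z)"
    by (rule has_field_derivative_transform_within_open[OF _ assms(3,4)]) (simp add: assms(5))
  then show ?thesis
    by (rule DERIV_imp_deriv)
qed

lemma holomorphic_log_has_field_derivative:
  assumes l: "l holomorphic_on S" and "open S" "z \<in> S"
    and exp_l: "\<And>w. w \<in> S \<Longrightarrow> f w = exp (l w)"
    and f': "(f has_field_derivative f') (at z)"
  shows "(l has_field_derivative f' / f z) (at z)"
proof -
  have l': "(l has_field_derivative deriv l z) (at z)"
    using holomorphic_derivI[OF l assms(2,3)] .
  then have "((\<lambda>w. exp (l w)) has_field_derivative exp (l z) * deriv l z) (at z)"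
    by (auto intro!: derivative_eq_intros)
  moreover have "((\<lambda>w. exp (l w)) has_field_derivative f') (at z)"
    by (rule has_field_derivative_transform_within_open[OF f' assms(2,3)]) (simp add: exp_l)
  ultimately have "exp (l z) * deriv l z = f'"
    by (rule DERIV_unique)
  then have "deriv l z = f' / f z"
    using exp_l[OF assms(3)] by (auto simp: field_simps)
  with l' show ?thesis
    by simp
qed

section \<open>An analytic criterion for convexity\<close>

text \<open>\<open>\<Lambda>\<close> is a branch of \<open>log \<psi>'\<close>, so the last assumption reads
  \<open>Re (1 + z \<psi>''(z) / \<psi>'(z)) > 0\<close>, the classical analytic characterisation of convex maps.\<close>

locale convex_criterion =
  fixes \<psi> \<Lambda> :: "complex \<Rightarrow> complex"
  assumes holomorphic_\<psi>: "\<psi> holomorphic_on ball 0 1"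
    and holomorphic_\<Lambda>: "\<Lambda> holomorphic_on ball 0 1"
    and deriv_\<psi>: "\<And>z. z \<in> ball 0 1 \<Longrightarrow> deriv \<psi> z = exp (\<Lambda> z)"
    and Re_pos: "\<And>z. z \<in> ball 0 1 \<Longrightarrow> 0 < Re (1 + z * deriv \<Lambda> z)"
begin

lemma \<psi>_has_field_derivative: "z \<in> ball 0 1 \<Longrightarrow> (\<psi> has_field_derivative exp (\<Lambda> z)) (at z)"
  using deriv_\<psi> holomorphic_\<psi> holomorphic_derivI by fastforce

lemma \<Lambda>_has_field_derivative: "z \<in> ball 0 1 \<Longrightarrow> (\<Lambda> has_field_derivative deriv \<Lambda> z) (at z)"
  using holomorphic_\<Lambda> holomorphic_derivI by fastforce

definition tangent :: "real \<Rightarrow> real \<Rightarrow> complex"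
  where "tangent r t = \<i> * rcis r t * exp (\<Lambda> (rcis r t))"

definition tangent_arg :: "real \<Rightarrow> real \<Rightarrow> real"
  where "tangent_arg r t = t + Im (\<Lambda> (rcis r t))"

definition tangent_norm :: "real \<Rightarrow> real \<Rightarrow> real"
  where "tangent_norm r t = r * exp (Re (\<Lambda> (rcis r t)))"

lemma circle_image_has_vector_derivative:
  assumes "\<bar>r\<bar> < 1"
  shows "((\<lambda>t. \<psi> (rcis r t)) has_vector_derivative tangent r t) (at t)"
  using rcis_comp_has_vector_derivative[OF \<psi>_has_field_derivative[of "rcis r t"]] assms
  by (simp add: tangent_def)

lemma tangent_eq_rcis: "tangent r t = \<i> * rcis (tangent_norm r t) (tangent_arg r t)"
  by (simp add: tangent_def tangent_norm_def tangent_arg_def exp_eq_polar[of "\<Lambda> _"] rcis_def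
      cis_mult[symmetric] mult_ac)

lemma Im_cnj_tangent_mult_tangent:
  "Im (cnj (tangent r a) * tangent r b)
     = tangent_norm r a * tangent_norm r b * sin (tangent_arg r b - tangent_arg r a)"
  by (simp add: tangent_eq_rcis rcis_def cis_cnj cis_mult sin_diff algebra_simps)

lemma tangent_norm_pos: "0 < r \<Longrightarrow> 0 < tangent_norm r t"
  by (simp add: tangent_norm_def)

lemma tangent_arg_add_2pi: "tangent_arg r (t + 2 * pi) = tangent_arg r t + 2 * pi"
  by (simp add: tangent_arg_def rcis_add_2pi)

lemma tangent_arg_strict_mono:
  assumes "\<bar>r\<bar> < 1" "a < b"
  shows "tangent_arg r a < tangent_arg r b"
proof (rule DERIV_pos_imp_increasing[OF assms(2)])
  fix t
  have "((\<lambda>t. \<Lambda> (rcis r t)) has_vector_derivative \<i> * rcis r t * deriv \<Lambda> (rcis r t)) (at t)"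
    using rcis_comp_has_vector_derivative[OF \<Lambda>_has_field_derivative[of "rcis r t"]] assms by simp
  from has_field_derivative_Im[OF this]
  have "((\<lambda>t. Im (\<Lambda> (rcis r t))) has_real_derivative Re (rcis r t * deriv \<Lambda> (rcis r t))) (at t)"
    by simp
  from DERIV_add[OF DERIV_ident this]
  have "(tangent_arg r has_real_derivative Re (1 + rcis r t * deriv \<Lambda> (rcis r t))) (at t)"
    by (simp add: tangent_arg_def[abs_def])
  moreover have "0 < Re (1 + rcis r t * deriv \<Lambda> (rcis r t))"
    by (rule Re_pos) (use assms in simp)
  ultimately show "\<exists>y. (tangent_arg r has_real_derivative y) (at t) \<and> 0 < y"
    by blast
qed

lemma chord_Im_has_real_derivative:
  assumes "\<bar>r\<bar> < 1"
  shows "((\<lambda>x. Im (cnj (tangent r t0) * (\<psi> (rcis r x) - \<psi> (rcis r t0)))) has_real_derivative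
      tangent_norm r t0 * tangent_norm r x * sin (tangent_arg r x - tangent_arg r t0)) (at x)"
proof -
  have "((\<lambda>x. cnj (tangent r t0) * (\<psi> (rcis r x) - \<psi> (rcis r t0))) has_vector_derivative
      cnj (tangent r t0) * tangent r x) (at x)"
    using circle_image_has_vector_derivative[OF assms, of x]
    by (auto intro!: derivative_eq_intros
        simp: has_vector_derivative_def scaleR_conv_of_real algebra_simps)
  from has_field_derivative_Im[OF this] show ?thesis
    unfolding Im_cnj_tangent_mult_tangent .
qed

lemma circle_image_left_of_tangent:
  assumes r: "0 < r" "r < 1" and t: "t0 < t" "t < t0 + 2 * pi"
  shows "0 < Im (cnj (tangent r t0) * (\<psi> (rcis r t) - \<psi> (rcis r t0)))"
proof -
  define S where "S x = Im (cnj (tangent r t0) * (\<psi> (rcis r x) - \<psi> (rcis r t0)))" for x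
  define S' where
    "S' x = tangent_norm r t0 * tangent_norm r x * sin (tangent_arg r x - tangent_arg r t0)" for x
  have S': "(S has_real_derivative S' x) (at x)" for x
    unfolding S_def[abs_def] S'_def using chord_Im_has_real_derivative r by simp
  have S_cont: "continuous_on A S" for A
    using S' by (meson DERIV_isCont continuous_at_imp_continuous_on)
  have norm_pos: "0 < tangent_norm r t0 * tangent_norm r x" for x
    using tangent_norm_pos r by simp
  have mono: "tangent_arg r a < tangent_arg r b" if "a < b" for a b
    using tangent_arg_strict_mono[of r a b] r that by simp
  \<comment> \<open>Over one period the tangent angle grows by exactly \<open>2 * pi\<close>, so \<open>S\<close> increases while the
    angle has turned by less than \<open>pi\<close> and then decreases back to \<open>S (t0 + 2 * pi) = 0\<close>.\<close>
  show ?thesis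
  proof (cases "tangent_arg r t - tangent_arg r t0 \<le> pi")
    case True
    have "S t0 < S t"
    proof (rule DERIV_pos_imp_increasing_open[of t0 t S, OF t(1) _ S_cont])
      fix x assume x: "t0 < x" "x < t"
      then have "0 < sin (tangent_arg r x - tangent_arg r t0)"
        using True mono[OF x(1)] mono[OF x(2)] by (intro sin_gt_zero) auto
      with norm_pos[of x] have "0 < S' x"
        by (simp add: S'_def)
      then show "\<exists>y. (S has_real_derivative y) (at x) \<and> 0 < y"
        using S' by blast
    qed
    then show ?thesis
      by (simp add: S_def)
  next
    case False
    have "S (t0 + 2 * pi) < S t"
    proof (rule DERIV_neg_imp_decreasing_open[of t "t0 + 2 * pi" S, OF t(2) _ S_cont])
      fix x assume x: "t < x" "x < t0 + 2 * pi"
      then have "sin (tangent_arg r x - tangent_arg r t0) < 0"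
        using False mono[OF x(1)] mono[OF x(2)] tangent_arg_add_2pi[of r t0]
        by (intro sin_lt_zero) auto
      with norm_pos[of x] have "S' x < 0"
        by (simp add: S'_def mult_pos_neg)
      then show "\<exists>y. (S has_real_derivative y) (at x) \<and> y < 0"
        using S' by blast
    qed
    then show ?thesis
      by (simp add: S_def rcis_add_2pi)
  qed
qed

lemma disc_image_left_of_tangent:
  assumes r: "0 < r" "r < 1" and z: "norm z \<le> r" "z \<noteq> rcis r t0"
  shows "0 < Im (cnj (tangent r t0) * (\<psi> z - \<psi> (rcis r t0)))"
proof -
  define F where "F z = - \<i> * (cnj (tangent r t0) * (\<psi> z - \<psi> (rcis r t0)))" for z
  have Re_F: "Re (F z) = Im (cnj (tangent r t0) * (\<psi> z - \<psi> (rcis r t0)))" for z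
    by (simp add: F_def)
  have hol_F: "F holomorphic_on ball 0 1"
    unfolding F_def[abs_def] using holomorphic_\<psi> by (auto intro!: holomorphic_intros)
  have on_circle: "0 < Re (F w)" if w: "norm w = r" "w \<noteq> rcis r t0" for w
  proof -
    obtain t where t: "t0 \<le> t" "t < t0 + 2 * pi" "w = rcis r t"
      using rcis_in_period[OF w(1)] by blast
    with w(2) have "t \<noteq> t0"
      by blast
    with t have "t0 < t"
      by simp
    with t show ?thesis
      unfolding Re_F using circle_image_left_of_tangent[OF r] by simp
  qed
  have nonneg: "0 \<le> Re (F w)" if "norm w \<le> r" for w
  proof (rule Re_nonneg_cball_if_nonneg_sphere[OF hol_F open_ball])
    show "cball 0 r \<subseteq> ball 0 1"
      using r by auto
    fix w' :: complex assume "w' \<in> sphere 0 r"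
    then show "0 \<le> Re (F w')"
      using on_circle[of w'] by (cases "w' = rcis r t0") (auto simp: F_def)
  qed (use that in simp)
  show ?thesis
  proof (cases "norm z = r")
    case True
    then show ?thesis
      using on_circle z Re_F by simp
  next
    case False
    have pos: "0 < Re (F (rcis r (t0 + pi)))"
      unfolding Re_F using circle_image_left_of_tangent[OF r, of t0 "t0 + pi"] by simp
    have "ball 0 r \<subseteq> ball (0::complex) 1"
      using r by auto
    from Re_pos_if_nonneg_on_open_subset[OF hol_F open_ball connected_ball open_ball this _ _ pos]
    have "0 < Re (F z)"
      using r z False nonneg by auto
    then show ?thesis
      unfolding Re_F .
  qed
qed

lemma inj_on_disc: "inj_on \<psi> (ball 0 1)"
proof -
  have "z1 = z2" if z: "z1 \<in> ball 0 1" "z2 \<in> ball 0 1" "norm z1 \<le> norm z2" "\<psi> z1 = \<psi> z2"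
    for z1 z2
  proof (rule ccontr)
    assume "z1 \<noteq> z2"
    with z(3) have "0 < norm z2"
      by auto
    obtain t where "z2 = rcis (norm z2) t"
      using rcis_in_period[of z2 "norm z2" 0] by blast
    then have "0 < Im (cnj (tangent (norm z2) t) * (\<psi> z1 - \<psi> z2))"
      using disc_image_left_of_tangent[of "norm z2" z1 t] \<open>0 < norm z2\<close> z \<open>z1 \<noteq> z2\<close> by auto
    with z(4) show False
      by simp
  qed
  then show ?thesis
    unfolding inj_on_def by (metis le_cases)
qed

lemma segment_left_of_tangent:
  assumes r: "0 < r" "r < 1" and z: "norm z1 < r" "norm z2 < r" and u: "0 \<le> u" "u \<le> 1"
  shows "0 < Im (cnj (tangent r t) * ((1 - u) *\<^sub>R \<psi> z1 + u *\<^sub>R \<psi> z2 - \<psi> (rcis r t)))"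
proof -
  define A where "A z = Im (cnj (tangent r t) * (\<psi> z - \<psi> (rcis r t)))" for z
  have "0 < A z1" "0 < A z2"
    unfolding A_def using disc_image_left_of_tangent r z by force+
  moreover have "Im (cnj (tangent r t) * ((1 - u) *\<^sub>R \<psi> z1 + u *\<^sub>R \<psi> z2 - \<psi> (rcis r t)))
      = (1 - u) * A z1 + u * A z2"
    by (simp add: A_def scaleR_conv_of_real algebra_simps)
  ultimately show ?thesis
    using u by (cases "u = 0") (auto intro: add_nonneg_pos)
qed

lemma in_image_if_left_of_all_tangents:
  assumes r: "0 < r" "r < 1"
    and left: "\<And>t. 0 < Im (cnj (tangent r t) * (c - \<psi> (rcis r t)))"
  shows "c \<in> \<psi> ` ball 0 1"
proof (rule ccontr)
  \<comment> \<open>Otherwise \<open>\<psi> - c\<close> has a logarithm on the disc, whose imaginary part along the circle is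
    periodic although it strictly increases.\<close>
  assume "c \<notin> \<psi> ` ball 0 1"
  then have nz: "\<psi> z - c \<noteq> 0" if "z \<in> ball 0 1" for z
    using that by force
  have "(\<lambda>z. \<psi> z - c) holomorphic_on ball 0 1"
    using holomorphic_\<psi> by (auto intro!: holomorphic_intros)
  from contractible_imp_holomorphic_log[OF this convex_imp_contractible[OF convex_ball] nz]
  obtain l where l: "l holomorphic_on ball 0 1" "\<And>z. z \<in> ball 0 1 \<Longrightarrow> \<psi> z - c = exp (l z)"
    by blast
  define S where "S t = Im (l (rcis r t))" for t
  have S': "(S has_real_derivative Im (tangent r t / (\<psi> (rcis r t) - c))) (at t)" for t
  proof -
    have "(l has_field_derivative exp (\<Lambda> (rcis r t)) / (\<psi> (rcis r t) - c)) (at (rcis r t))"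
      by (rule holomorphic_log_has_field_derivative[OF l(1) open_ball _ l(2)])
        (use r \<psi>_has_field_derivative in \<open>auto intro!: derivative_eq_intros\<close>)
    from has_field_derivative_Im[OF rcis_comp_has_vector_derivative[OF this]]
    show ?thesis
      by (simp add: S_def[abs_def] tangent_def)
  qed
  have S'_pos: "0 < Im (tangent r t / (\<psi> (rcis r t) - c))" for t
  proof -
    have "Im (tangent r t / (\<psi> (rcis r t) - c))
        = Im (cnj (tangent r t) * (c - \<psi> (rcis r t))) / (norm (\<psi> (rcis r t) - c))\<^sup>2"
      by (simp add: Im_divide cmod_power2 algebra_simps)
    then show ?thesis
      using left[of t] nz[of "rcis r t"] r by simp
  qed
  have "S 0 < S (2 * pi)"
    by (rule DERIV_pos_imp_increasing[of 0 "2 * pi" S]) (use S' S'_pos in \<open>simp_all, blast\<close>)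
  then show False
    using rcis_add_2pi[of r 0] by (simp add: S_def)
qed

lemma convex_image: "convex (\<psi> ` ball 0 1)"
proof (rule convexI)
  fix p q :: complex and u v :: real
  assume "p \<in> \<psi> ` ball 0 1" "q \<in> \<psi> ` ball 0 1" and uv: "0 \<le> u" "0 \<le> v" "u + v = 1"
  then obtain z1 z2 where z: "z1 \<in> ball 0 1" "z2 \<in> ball 0 1" "p = \<psi> z1" "q = \<psi> z2"
    by blast
  define r where "r = max (norm z1) (norm z2) / 2 + 1 / 2"
  have "max (norm z1) (norm z2) < 1"
    using z by simp
  then have r: "0 < r" "r < 1" "norm z1 < r" "norm z2 < r"
    using max.cobounded1[of "norm z1" "norm z2"] max.cobounded2[of "norm z2" "norm z1"]
      norm_ge_zero[of z1]
    unfolding r_def by linarith+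
  show "u *\<^sub>R p + v *\<^sub>R q \<in> \<psi> ` ball 0 1"
  proof (rule in_image_if_left_of_all_tangents[OF r(1,2)])
    fix t
    show "0 < Im (cnj (tangent r t) * (u *\<^sub>R p + v *\<^sub>R q - \<psi> (rcis r t)))"
      using segment_left_of_tangent[OF r, of v t] uv z by (simp add: eq_diff_eq[symmetric])
  qed
qed

end

section \<open>Convex univalent maps satisfy the criterion\<close>

lemma convex_univalent_combination_in_image:
  fixes \<phi> :: "complex \<Rightarrow> complex"
  assumes hol: "\<phi> holomorphic_on ball 0 1" and inj: "inj_on \<phi> (ball 0 1)"
    and cvx: "convex (\<phi> ` ball 0 1)"
    and z: "z \<in> ball 0 1" and x: "norm x \<le> 1" and s: "0 \<le> s" "s \<le> 1"
  shows "(1 - s) *\<^sub>R \<phi> z + s *\<^sub>R \<phi> (x * z) \<in> \<phi> ` cball 0 (norm z)"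
proof -
  obtain k where k_hol: "k holomorphic_on \<phi> ` ball 0 1"
    and k: "\<And>w. w \<in> ball 0 1 \<Longrightarrow> k (\<phi> w) = w"
    using holomorphic_has_inverse[OF hol open_ball inj] by metis
  have x_mult: "x * w \<in> ball 0 1" if "w \<in> ball 0 1" for w
    using that x mult_left_le_one_le[of "norm w" "norm x"] by (simp add: norm_mult)
  define c where "c w = (1 - s) *\<^sub>R \<phi> w + s *\<^sub>R \<phi> (x * w)" for w
  have c_in: "c w \<in> \<phi> ` ball 0 1" if "w \<in> ball 0 1" for w
    unfolding c_def using convexD[OF cvx, of "\<phi> w" "\<phi> (x * w)" "1 - s" s] that x_mult s by auto
  have "(\<phi> \<circ> (\<lambda>w. x * w)) holomorphic_on ball 0 1"
    by (rule holomorphic_on_compose_gen[OF _ hol]) (auto intro!: holomorphic_intros x_mult)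
  then have "c holomorphic_on ball 0 1"
    unfolding c_def[abs_def] using hol
    by (auto intro!: holomorphic_intros simp: o_def scaleR_conv_of_real)
  \<comment> \<open>Schwarz's lemma applies to \<open>k \<circ> c\<close>, which fixes \<open>0\<close> because \<open>c 0 = \<phi> 0\<close>.\<close>
  then have "(k \<circ> c) holomorphic_on ball 0 1"
    by (rule holomorphic_on_compose_gen[OF _ k_hol]) (use c_in in blast)
  moreover have "(k \<circ> c) 0 = 0"
    using k[of 0] by (simp add: c_def scaleR_left_distrib[symmetric])
  moreover have "norm ((k \<circ> c) w) < 1" if "norm w < 1" for w
    using c_in[of w] that k by auto
  ultimately have "norm ((k \<circ> c) z) \<le> norm z"
    using z by (intro Schwarz_Lemma(1)) (auto simp: o_def)
  moreover obtain w where "w \<in> ball 0 1" "c z = \<phi> w"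
    using c_in[OF z] by blast
  ultimately show ?thesis
    using k by (auto simp: c_def)
qed

lemma convex_univalent_support:
  fixes \<phi> :: "complex \<Rightarrow> complex"
  assumes hol: "\<phi> holomorphic_on ball 0 1" and inj: "inj_on \<phi> (ball 0 1)"
    and cvx: "convex (\<phi> ` ball 0 1)"
    and z: "z \<in> ball 0 1" "z \<noteq> 0" and x: "norm x \<le> 1"
  shows "Re ((\<phi> (x * z) - \<phi> z) / (z * deriv \<phi> z)) \<le> 0"
proof -
  define d where "d = \<phi> (x * z) - \<phi> z"
  define V where "V s = inv_into (ball 0 1) \<phi> (\<phi> z + of_real s * d)" for s :: real
  have "((\<lambda>s::real. \<phi> z + of_real s * d) has_vector_derivative d) (at 0)"
    using has_vector_derivative_real_field[of "\<lambda>w. \<phi> z + w * d" d 0]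
    by (auto intro!: derivative_eq_intros)
  moreover have "(inv_into (ball 0 1) \<phi> has_field_derivative 1 / deriv \<phi> z)
      (at (\<phi> z + of_real 0 * d))"
    using inv_into_has_field_derivative[OF hol open_ball inj z(1)] by simp
  ultimately have "(V has_vector_derivative d / deriv \<phi> z) (at 0)"
    using field_vector_diff_chain_at by (fastforce simp: V_def[abs_def] o_def)
  moreover have "V 0 = z"
    using inj z(1) by (simp add: V_def)
  moreover have "norm (V s) \<le> norm (V 0)" if s: "0 < s" "s < 1" for s
  proof -
    obtain w where w: "w \<in> cball 0 (norm z)" "(1 - s) *\<^sub>R \<phi> z + s *\<^sub>R \<phi> (x * z) = \<phi> w"
      using convex_univalent_combination_in_image[OF hol inj cvx z(1) x, of s] s by auto
    moreover have "\<phi> z + of_real s * d = (1 - s) *\<^sub>R \<phi> z + s *\<^sub>R \<phi> (x * z)"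
      by (simp add: d_def scaleR_conv_of_real algebra_simps)
    ultimately show ?thesis
      using z(1) inj \<open>V 0 = z\<close> by (simp add: V_def)
  qed
  ultimately have "Re (cnj z * (d / deriv \<phi> z)) \<le> 0"
    using Re_cnj_mult_deriv_nonpos_if_norm_max by metis
  moreover have "Re (d / (z * deriv \<phi> z)) = Re (cnj z * (d / deriv \<phi> z)) / (norm z)\<^sup>2"
  proof -
    have "Re (a / z) = Re (cnj z * a) / (norm z)\<^sup>2" for a
      by (simp add: Re_divide cmod_power2 algebra_simps)
    then show ?thesis
      by (metis divide_divide_eq_left mult.commute)
  qed
  ultimately show ?thesis
    by (simp add: d_def divide_nonpos_nonneg)
qed

lemma convex_univalent_Re_nonneg:
  fixes \<phi> L :: "complex \<Rightarrow> complex"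
  assumes hol: "\<phi> holomorphic_on ball 0 1" and inj: "inj_on \<phi> (ball 0 1)"
    and cvx: "convex (\<phi> ` ball 0 1)"
    and L: "L holomorphic_on ball 0 1" "\<And>z. z \<in> ball 0 1 \<Longrightarrow> exp (L z) = deriv \<phi> z"
    and z: "z \<in> ball 0 1"
  shows "0 \<le> Re (1 + z * deriv L z)"
proof (cases "z = 0")
  case False
  define r \<theta> where "r = norm z" and "\<theta> = Arg z"
  have z_eq: "rcis r \<theta> = z"
    by (simp add: r_def \<theta>_def rcis_cmod_Arg)
  have circle: "rcis r t \<in> ball 0 1" for t
    using z by (simp add: r_def)
  define W where "W = z * exp (L z)"
  have "W \<noteq> 0"
    using False by (simp add: W_def)
  define F where "F w = (\<phi> w - \<phi> z) / W" for w
  define \<Phi> where "\<Phi> w = \<i> * w * exp (L w) / W" for w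
  define G where "G t = Re (F (rcis r t))" for t
  \<comment> \<open>\<open>G\<close> is maximal at \<open>\<theta>\<close> by the support inequality, and \<open>G''(\<theta>) = - Re (1 + z L'(z))\<close>.\<close>
  have max: "G t \<le> G \<theta>" for t
  proof -
    have "rcis r t = cis (t - \<theta>) * z"
      unfolding z_eq[symmetric] by (simp add: rcis_def cis_mult mult_ac)
    then show ?thesis
      using convex_univalent_support[OF hol inj cvx z False, of "cis (t - \<theta>)"]
      by (simp add: G_def F_def W_def L(2)[OF z] z_eq)
  qed
  have G': "(G has_real_derivative Re (\<Phi> (rcis r t))) (at t)" for t
  proof -
    have "(F has_field_derivative exp (L (rcis r t)) / W) (at (rcis r t))"
      using holomorphic_derivI[OF hol open_ball circle] L(2)[OF circle] \<open>W \<noteq> 0\<close>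
      unfolding F_def[abs_def] by (auto intro!: derivative_eq_intros)
    from has_field_derivative_Re[OF rcis_comp_has_vector_derivative[OF this]] show ?thesis
      by (simp add: G_def[abs_def] \<Phi>_def)
  qed
  have "(\<Phi> has_field_derivative \<i> * exp (L z) * (1 + z * deriv L z) / W) (at (rcis r \<theta>))"
    using holomorphic_derivI[OF L(1) open_ball z] \<open>W \<noteq> 0\<close> unfolding z_eq \<Phi>_def[abs_def]
    by (auto intro!: derivative_eq_intros simp: field_simps)
  from has_field_derivative_Re[OF rcis_comp_has_vector_derivative[OF this]]
  have "((\<lambda>t. Re (\<Phi> (rcis r t))) has_real_derivative
      Re (\<i> * z * (\<i> * exp (L z) * (1 + z * deriv L z) / W))) (at \<theta>)"
    unfolding z_eq .
  moreover have "\<i> * z * (\<i> * exp (L z) * (1 + z * deriv L z) / W) = - (1 + z * deriv L z)"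
    using False by (simp add: W_def)
  ultimately have G'':
      "((\<lambda>t. Re (\<Phi> (rcis r t))) has_real_derivative - Re (1 + z * deriv L z)) (at \<theta>)"
    by (metis uminus_complex.sel(1))
  show ?thesis
    using second_deriv_nonpos_at_max[OF G' G'' max] by simp
qed simp

lemma convex_univalent_imp_convex_criterion:
  fixes \<phi> L :: "complex \<Rightarrow> complex"
  assumes hol: "\<phi> holomorphic_on ball 0 1" and inj: "inj_on \<phi> (ball 0 1)"
    and cvx: "convex (\<phi> ` ball 0 1)"
    and L: "L holomorphic_on ball 0 1" "\<And>z. z \<in> ball 0 1 \<Longrightarrow> exp (L z) = deriv \<phi> z"
  shows "convex_criterion \<phi> L"
proof
  fix z :: complex assume z: "z \<in> ball 0 1"
  define p where "p w = 1 + w * deriv L w" for w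
  have hol_p: "p holomorphic_on ball 0 1"
    unfolding p_def[abs_def] using holomorphic_deriv[OF L(1) open_ball]
    by (auto intro!: holomorphic_intros)
  have nonneg: "0 \<le> Re (p w)" if "w \<in> ball 0 1" for w
    unfolding p_def using convex_univalent_Re_nonneg[OF hol inj cvx L that] .
  have "0 < Re (p z)"
    by (rule Re_pos_if_nonneg_on_open_subset[OF hol_p open_ball connected_ball
          open_ball order_refl nonneg _ _ z, of 0]) (simp_all add: p_def)
  then show "0 < Re (1 + z * deriv L z)"
    by (simp add: p_def)
qed (use assms in simp_all)

lemma convex_criterion_scale:
  assumes "convex_criterion \<phi> L" and "\<psi> holomorphic_on ball 0 1"
    and "\<And>z. z \<in> ball 0 1 \<Longrightarrow> deriv \<psi> z = exp (of_real \<alpha> * L z)"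
    and "0 \<le> \<alpha>" "\<alpha> \<le> 1"
  shows "convex_criterion \<psi> (\<lambda>z. of_real \<alpha> * L z)"
proof -
  interpret convex_criterion \<phi> L
    by fact
  show ?thesis
  proof
    fix z :: complex assume z: "z \<in> ball 0 1"
    have "deriv (\<lambda>z. of_real \<alpha> * L z) z = of_real \<alpha> * deriv L z"
      using holomorphic_on_imp_differentiable_at[OF holomorphic_\<Lambda> open_ball z] by simp
    then have "Re (1 + z * deriv (\<lambda>z. of_real \<alpha> * L z) z) = (1 - \<alpha>) + \<alpha> * Re (1 + z * deriv L z)"
      by (simp add: algebra_simps)
    also have "\<dots> > 0"
      using Re_pos[OF z] assms(4,5) by (cases "\<alpha> = 0") (auto intro: add_nonneg_pos)
    finally show "0 < Re (1 + z * deriv (\<lambda>z. of_real \<alpha> * L z) z)" .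
  qed (use assms holomorphic_\<Lambda> in \<open>auto intro!: holomorphic_intros\<close>)
qed

section \<open>The shear construction\<close>

lemma Re_one_plus_div_one_minus_pos:
  assumes "norm w < 1"
  shows "0 < Re ((1 + w) / (1 - w))"
proof -
  have "Re (1 + w) * Re (1 - w) + Im (1 + w) * Im (1 - w) = 1 - (norm w)\<^sup>2"
    unfolding cmod_power2 by (simp add: power2_eq_square algebra_simps)
  then have "Re ((1 + w) / (1 - w)) = (1 - (norm w)\<^sup>2) / (norm (1 - w))\<^sup>2"
    by (simp only: Re_divide')
  moreover have "0 < 1 - (norm w)\<^sup>2" "w \<noteq> 1"
    using assms by (auto simp: abs_square_less_1)
  ultimately show ?thesis
    by simp
qed

lemma univalent_segment_lift:
  fixes \<psi> :: "complex \<Rightarrow> complex"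
  assumes hol: "\<psi> holomorphic_on S" and "open S" and inj: "inj_on \<psi> S"
    and cvx: "convex (\<psi> ` S)" and z: "z1 \<in> S" "z2 \<in> S"
  obtains \<gamma> where "\<gamma> 0 = z1" "\<gamma> 1 = z2"
    and "\<And>s. s \<in> {0..1} \<Longrightarrow> \<gamma> s \<in> S"
    and "\<And>s. s \<in> {0..1} \<Longrightarrow> (\<gamma> has_vector_derivative (\<psi> z2 - \<psi> z1) / deriv \<psi> (\<gamma> s)) (at s)"
proof -
  define u where "u s = \<psi> z1 + of_real s * (\<psi> z2 - \<psi> z1)" for s :: real
  have u_in: "u s \<in> \<psi> ` S" if "s \<in> {0..1}" for s
    using convexD[OF cvx, of "\<psi> z1" "\<psi> z2" "1 - s" s] that z
    by (auto simp: u_def scaleR_conv_of_real algebra_simps)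
  show ?thesis
  proof (rule that[of "\<lambda>s. inv_into S \<psi> (u s)"])
    show "inv_into S \<psi> (u 0) = z1" "inv_into S \<psi> (u 1) = z2"
      using inj z by (simp_all add: u_def)
    fix s :: real assume s: "s \<in> {0..1}"
    then obtain w where w: "w \<in> S" "u s = \<psi> w"
      using u_in by blast
    then show "inv_into S \<psi> (u s) \<in> S"
      using inj by simp
    have "((\<lambda>v. \<psi> z1 + v * (\<psi> z2 - \<psi> z1)) has_field_derivative \<psi> z2 - \<psi> z1) (at (of_real s))"
      by (auto intro!: derivative_eq_intros)
    from has_vector_derivative_real_field[OF this]
    have "(u has_vector_derivative \<psi> z2 - \<psi> z1) (at s)"
      by (simp add: u_def[abs_def])
    moreover have "(inv_into S \<psi> has_field_derivative 1 / deriv \<psi> w) (at (u s))"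
      using inv_into_has_field_derivative[OF hol \<open>open S\<close> inj w(1)] w(2) by simp
    ultimately show "((\<lambda>s. inv_into S \<psi> (u s)) has_vector_derivative
        (\<psi> z2 - \<psi> z1) / deriv \<psi> (inv_into S \<psi> (u s))) (at s)"
      using field_vector_diff_chain_at[of u _ s "inv_into S \<psi>"] w inj by (fastforce simp: o_def)
  qed
qed

lemma shear_Re_add_neq:
  fixes H G \<psi> w :: "complex \<Rightarrow> complex"
  assumes H: "H holomorphic_on S" and G: "G holomorphic_on S" and "open S"
    and \<psi>: "\<psi> holomorphic_on S" "inj_on \<psi> S" "convex (\<psi> ` S)"
    and diff: "\<And>z. z \<in> S \<Longrightarrow> H z - G z = \<psi> z"
    and dil: "\<And>z. z \<in> S \<Longrightarrow> deriv G z = w z * deriv H z"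
    and w: "\<And>z. z \<in> S \<Longrightarrow> norm (w z) < 1"
    and z: "z1 \<in> S" "z2 \<in> S" "z1 \<noteq> z2" and Im_eq: "Im (\<psi> z1) = Im (\<psi> z2)"
  shows "Re (H z1 + G z1) \<noteq> Re (H z2 + G z2)"
proof
  assume Re_eq: "Re (H z1 + G z1) = Re (H z2 + G z2)"
  have \<psi>': "deriv \<psi> z = deriv H z * (1 - w z)" if "z \<in> S" for z
    using deriv_eq_deriv_diff[OF H G \<open>open S\<close> that diff] dil[OF that] by (simp add: algebra_simps)
  define t where "t = \<psi> z2 - \<psi> z1"
  have "t \<noteq> 0"
    using \<psi>(2) z by (auto simp: t_def inj_on_def)
  moreover have Im_t: "Im t = 0"
    using Im_eq by (simp add: t_def)
  ultimately have "Re t \<noteq> 0"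
    by (simp add: complex_eq_iff)
  have Re_mult_t: "Re (t * q) = Re t * Re q" for q
    using Im_t by simp
  obtain \<gamma> where \<gamma>: "\<gamma> 0 = z1" "\<gamma> 1 = z2" "\<And>s. s \<in> {0..1} \<Longrightarrow> \<gamma> s \<in> S"
    "\<And>s. s \<in> {0..1} \<Longrightarrow> (\<gamma> has_vector_derivative t / deriv \<psi> (\<gamma> s)) (at s)"
    using univalent_segment_lift[OF \<psi>(1) \<open>open S\<close> \<psi>(2,3) z(1,2)] unfolding t_def by metis
  define R where "R s = Re (H (\<gamma> s) + G (\<gamma> s))" for s
  define R' where "R' s = Re t * Re ((1 + w (\<gamma> s)) / (1 - w (\<gamma> s)))" for s
  have R': "(R has_real_derivative R' s) (at s)" if s: "s \<in> {0..1}" for s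
  proof -
    let ?z = "\<gamma> s"
    have "((\<lambda>s. H (\<gamma> s) + G (\<gamma> s)) has_vector_derivative
        t / deriv \<psi> ?z * deriv H ?z + t / deriv \<psi> ?z * deriv G ?z) (at s)"
      using field_vector_diff_chain_at[OF \<gamma>(4)[OF s] holomorphic_derivI[OF H \<open>open S\<close> \<gamma>(3)[OF s]]]
        field_vector_diff_chain_at[OF \<gamma>(4)[OF s] holomorphic_derivI[OF G \<open>open S\<close> \<gamma>(3)[OF s]]]
      by (auto intro!: derivative_eq_intros simp: o_def)
    moreover have "deriv H ?z \<noteq> 0" "1 - w ?z \<noteq> 0"
      using holomorphic_injective_imp_regular[OF \<psi>(1) \<open>open S\<close> \<psi>(2) \<gamma>(3)[OF s]] \<psi>'[OF \<gamma>(3)[OF s]]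
      by auto
    then have "t / deriv \<psi> ?z * deriv H ?z + t / deriv \<psi> ?z * deriv G ?z
        = t * ((1 + w ?z) / (1 - w ?z))"
      unfolding \<psi>'[OF \<gamma>(3)[OF s]] dil[OF \<gamma>(3)[OF s]]
      by (simp add: divide_simps) (simp add: algebra_simps)
    ultimately have "((\<lambda>s. H (\<gamma> s) + G (\<gamma> s)) has_vector_derivative
        t * ((1 + w ?z) / (1 - w ?z))) (at s)"
      by simp
    from has_field_derivative_Re[OF this] show ?thesis
      unfolding R_def[abs_def] R'_def Re_mult_t .
  qed
  have "R' s \<noteq> 0" if "0 < s" "s < 1" for s
    using Re_one_plus_div_one_minus_pos[OF w[OF \<gamma>(3)[of s]]] that \<open>Re t \<noteq> 0\<close>
    by (simp add: R'_def)
  from DERIV_nonzero_imp_neq[OF zero_less_one R' this] show False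
    using Re_eq by (simp add: R_def \<gamma>)
qed

lemma shear_inj_on:
  fixes H G \<psi> w :: "complex \<Rightarrow> complex"
  assumes H: "H holomorphic_on S" and G: "G holomorphic_on S" and "open S"
    and \<psi>: "\<psi> holomorphic_on S" "inj_on \<psi> S" "convex (\<psi> ` S)"
    and diff: "\<And>z. z \<in> S \<Longrightarrow> H z - G z = \<psi> z"
    and dil: "\<And>z. z \<in> S \<Longrightarrow> deriv G z = w z * deriv H z"
    and w: "\<And>z. z \<in> S \<Longrightarrow> norm (w z) < 1"
  shows "inj_on (\<lambda>z. H z + cnj (G z)) S"
proof (rule inj_onI, rule ccontr)
  fix z1 z2
  assume z: "z1 \<in> S" "z2 \<in> S" and eq: "H z1 + cnj (G z1) = H z2 + cnj (G z2)" and "z1 \<noteq> z2"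
  from eq have "Im (\<psi> z1) = Im (\<psi> z2)"
    using diff[OF z(1)] diff[OF z(2)] by (auto simp: complex_eq_iff)
  moreover from eq have "Re (H z1 + G z1) = Re (H z2 + G z2)"
    by (simp add: complex_eq_iff)
  ultimately show False
    using shear_Re_add_neq[OF H G \<open>open S\<close> \<psi> diff dil w z \<open>z1 \<noteq> z2\<close>] by blast
qed

lemma deriv_eq_mult_if_quotient:
  assumes H: "H holomorphic_on S" and G: "G holomorphic_on S" and w: "w holomorphic_on S"
    and "open S" "connected S"
    and quot: "\<And>z. z \<in> S \<Longrightarrow> deriv G z / deriv H z = w z"
    and z0: "z0 \<in> S" "deriv H z0 \<noteq> 0" and z: "z \<in> S"
  shows "deriv G z = w z * deriv H z"
proof -
  define U where "U = S \<inter> deriv H -` (- {0})"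
  have "open U"
    unfolding U_def
    using continuous_open_preimage[OF holomorphic_on_imp_continuous_on[OF
          holomorphic_deriv[OF H \<open>open S\<close>]] \<open>open S\<close>] by (simp add: open_Compl)
  moreover have "z0 \<in> U"
    using z0 by (simp add: U_def)
  moreover have "(\<lambda>z. deriv G z - w z * deriv H z) holomorphic_on S"
    using holomorphic_deriv[OF G \<open>open S\<close>] holomorphic_deriv[OF H \<open>open S\<close>] w
    by (auto intro!: holomorphic_intros)
  moreover have "deriv G z - w z * deriv H z = 0" if "z \<in> U" for z
    using quot[of z] that by (auto simp: U_def field_simps)
  ultimately have "deriv G z - w z * deriv H z = 0"
    using analytic_continuation[OF _ \<open>open S\<close> \<open>connected S\<close> _ z0(1) open_imp_islimpt _ z, of _ U]
    unfolding U_def by blast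
  then show ?thesis
    by simp
qed

lemma harmonic_shear_inj_on:
  fixes H G \<psi> w :: "complex \<Rightarrow> complex"
  assumes H: "H holomorphic_on S" and G: "G holomorphic_on S" and "open S" "connected S"
    and \<psi>: "\<psi> holomorphic_on S" "inj_on \<psi> S" "convex (\<psi> ` S)"
    and diff: "\<And>z. z \<in> S \<Longrightarrow> H z - G z = \<psi> z"
    and w: "w holomorphic_on S" "\<And>z. z \<in> S \<Longrightarrow> norm (w z) < 1"
    and quot: "\<And>z. z \<in> S \<Longrightarrow> deriv G z / deriv H z = w z"
  shows "inj_on (\<lambda>z. H z + cnj (G z)) S"
proof (cases "\<exists>z0\<in>S. deriv H z0 \<noteq> 0")
  case True
  then obtain z0 where z0: "z0 \<in> S" "deriv H z0 \<noteq> 0"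
    by blast
  show ?thesis
  proof (rule shear_inj_on[OF H G \<open>open S\<close> \<psi> diff _ w(2)])
    fix z assume "z \<in> S"
    then show "deriv G z = w z * deriv H z"
      using deriv_eq_mult_if_quotient[OF H G w(1) \<open>open S\<close> \<open>connected S\<close>] quot z0 by blast
  qed
next
  \<comment> \<open>Possible only through division by zero in \<open>quot\<close>: then \<open>H\<close> is constant and the map is
    \<open>- cnj \<psi>\<close> up to an additive constant.\<close>
  case False
  have "H constant_on S"
  proof (rule DERIV_zero_connected_constant_on[of S "{}"])
    show "continuous_on S H"
      using H by (rule holomorphic_on_imp_continuous_on)
    show "\<forall>z\<in>S - {}. (H has_field_derivative 0) (at z)"
      using False holomorphic_derivI[OF H \<open>open S\<close>] by fastforce
  qed (use \<open>open S\<close> \<open>connected S\<close> in simp_all)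
  then obtain c where c: "\<And>z. z \<in> S \<Longrightarrow> H z = c"
    unfolding constant_on_def by blast
  have "H z + cnj (G z) = c + cnj c - cnj (\<psi> z)" if "z \<in> S" for z
  proof -
    have "G z = c - \<psi> z"
      using c[OF that] diff[OF that] by (simp add: algebra_simps)
    then show ?thesis
      using c[OF that] by simp
  qed
  with \<psi>(2) show ?thesis
    by (auto simp: inj_on_def)
qed

lemma sense_preserving_dilatation:
  assumes "h holomorphic_on unit_disc" "g holomorphic_on unit_disc" "sense_preserving_harm h g"
  shows "(\<lambda>z. deriv g z / deriv h z) holomorphic_on unit_disc"
    and "z \<in> unit_disc \<Longrightarrow> norm (deriv g z / deriv h z) < 1"
proof -
  have lt: "norm (deriv g z) < norm (deriv h z)" if "z \<in> unit_disc" for z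
    using assms(3) that by (simp add: sense_preserving_harm_def)
  have "open unit_disc"
    by (simp add: unit_disc_def)
  then show "(\<lambda>z. deriv g z / deriv h z) holomorphic_on unit_disc"
    using holomorphic_deriv[OF assms(1)] holomorphic_deriv[OF assms(2)] lt
    by (fastforce intro!: holomorphic_intros)
  show "z \<in> unit_disc \<Longrightarrow> norm (deriv g z / deriv h z) < 1"
    using lt[of z] by (auto simp: norm_divide divide_less_eq)
qed

theorem mainTheorem5:
  fixes h g \<phi> \<omega> :: "complex \<Rightarrow> complex" and \<alpha> :: real
    and L \<phi>\<alpha> H G :: "complex \<Rightarrow> complex"
  assumes h_hol: "h holomorphic_on unit_disc" and g_hol: "g holomorphic_on unit_disc"
    and norm: "h 0 = 0" "g 0 = 0" "deriv h 0 = 1" "deriv g 0 = 0"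
    and sp: "sense_preserving_harm h g"
    and \<omega>_def: "\<forall>z\<in>unit_disc. \<omega> z = deriv g z / deriv h z"
    and \<phi>_def: "\<forall>z\<in>unit_disc. \<phi> z = h z - g z"
    and \<phi>_conv: "convex_mapping \<phi>"
    and \<alpha>: "0 \<le> \<alpha>" "\<alpha> \<le> 1" "\<alpha> * sup_norm \<omega> < 1/3"
    \<comment> \<open>L is the branch of log \<phi>' with L 0 = 0, so (\<phi>')^\<alpha> = exp(\<alpha> L) has value 1 at 0\<close>
    and L_hol: "L holomorphic_on unit_disc" and L0: "L 0 = 0"
    and L_log: "\<forall>z\<in>unit_disc. exp (L z) = deriv \<phi> z"
    \<comment> \<open>\<phi>\<alpha>(z) = integral from 0 to z of (\<phi>')^\<alpha>\<close>
    and \<phi>\<alpha>_hol: "\<phi>\<alpha> holomorphic_on unit_disc" and \<phi>\<alpha>0: "\<phi>\<alpha> 0 = 0"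
    and \<phi>\<alpha>_deriv: "\<forall>z\<in>unit_disc. deriv \<phi>\<alpha> z = exp (complex_of_real \<alpha> * L z)"
    and H_hol: "H holomorphic_on unit_disc" and G_hol: "G holomorphic_on unit_disc"
    and HG0: "H 0 = 0" "G 0 = 0"
    and HG_diff: "\<forall>z\<in>unit_disc. H z - G z = \<phi>\<alpha> z"
    and HG_dil: "\<forall>z\<in>unit_disc. deriv G z / deriv H z = complex_of_real \<alpha> * \<omega> z"
  shows "inj_on (\<lambda>z. H z + cnj (G z)) unit_disc"
proof -
  have disc: "unit_disc = ball 0 1"
    by (simp add: unit_disc_def)
  have \<phi>: "\<phi> holomorphic_on ball 0 1" "inj_on \<phi> (ball 0 1)" "convex (\<phi> ` ball 0 1)"
    using \<phi>_conv by (simp_all add: convex_mapping_def disc)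
  have "convex_criterion \<phi> L"
    using convex_univalent_imp_convex_criterion[OF \<phi>] L_hol L_log by (simp add: disc)
  then interpret \<phi>\<alpha>: convex_criterion \<phi>\<alpha> "\<lambda>z. of_real \<alpha> * L z"
    by (rule convex_criterion_scale) (use \<phi>\<alpha>_hol \<phi>\<alpha>_deriv \<alpha> in \<open>simp_all add: disc\<close>)
  have \<omega>_hol: "\<omega> holomorphic_on ball 0 1"
    using holomorphic_transform[OF sense_preserving_dilatation(1)[OF h_hol g_hol sp]] \<omega>_def
    by (simp add: disc)
  have \<alpha>\<omega>_lt: "norm (of_real \<alpha> * \<omega> z) < 1" if "z \<in> ball 0 1" for z
  proof -
    have "norm (\<omega> z) < 1"
      using sense_preserving_dilatation(2)[OF h_hol g_hol sp] \<omega>_def that by (simp add: disc)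
    then show ?thesis
      using \<alpha>(1,2) mult_left_le_one_le[of "norm (\<omega> z)" \<alpha>] by (simp add: norm_mult)
  qed
  show ?thesis
    unfolding disc
    by (rule harmonic_shear_inj_on[OF _ _ open_ball connected_ball \<phi>\<alpha>.holomorphic_\<psi>
          \<phi>\<alpha>.inj_on_disc \<phi>\<alpha>.convex_image])
      (use H_hol G_hol HG_diff HG_dil \<omega>_hol \<alpha>\<omega>_lt in \<open>auto simp: disc intro!: holomorphic_intros\<close>)
qed

end
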